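(* Let $P$ be an optimal planning problem that has a feasible solution and whose optimal cost $C^*$ is attained. Let $A$ be a well-behaved randomized feasible planner. Consider Asymptotically-optimal$(P,A,n)$: run $A$ on $P_\infty$ to obtain $y_0$ and set $c_0=C(y_0)$; for $i=1,\dots,n$ run $A$ on $P_{c_{i-1}}$ to obtain $y_i$ and set $c_i=C(y_i)$; return $y_n$. Then this procedure is asymptotically optimal: for every $\epsilon>0$, $\Pr\big(C(y_n)-C^*\ge\epsilon\big)\to 0$ as $n\to\infty$, and $C(y_n)\to C^*$ with probability 1.
   Context: A feasible kinodynamic planning problem asks for $S\ge0$, $y:[0,S]\to X$, $u:[0,S]\to U$ with $y(0)=x_I$, $y(S)\in G$, $y(s)\in F$, $u(s)\in B(y(s))$, $y'(s)=D(y(s),u(s))$ for all $s$. An optimal planning problem $P$ also specifies an incremental cost $L$ and terminal cost $\Phi$ and minimizes $C(y)=\int_0^S L(y(s),u(s))ds+\Phi(y(S))$ over feasible solutions, with minimum $C^*$. For $\bar c\in\mathbb{R}\cup\{\infty\}$, $P_{\bar c}$ is the feasible kinodynamic problem (in state-cost space, with augmented state $(x,c)$, start $(x_I,0)$, dynamics $x'=D(x,u)$, $c'=L(x,u)$, goal $\{(x,c):x\in G,\ c+\Phi(x)\le\bar c\}$) whose solutions are exactly the feasible trajectories of $P$ with $C(y)\le\bar c$. A randomized planner $A$, run on $P_{\bar c}$, returns a random solution $y$. $A$ is well-behaved if (1) whenever a feasible solution exists and $\bar c>C^*$, $A$ on $P_{\bar c}$ terminates in finite time; and (2) there is a constant $w>0$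 such that for every cost bound $\bar c$, the returned solution satisfies $E\big[C(y)-C^*\mid\bar c\big]\le(1-w)(\bar c-C^* )$. *)

theory Defs
  imports "HOL-Probability.Probability"
begin

record ('x, 'u) opt_problem =
  StateSp :: "'x set"
  CtrlSp  :: "'u set"
  x_init  :: "'x"
  Goal    :: "'x set"
  Free    :: "'x set"
  Adm     :: "'x \<Rightarrow> 'u set"
  Dyn     :: "'x \<Rightarrow> 'u \<Rightarrow> 'x"
  IncCost :: "'x \<Rightarrow> 'u \<Rightarrow> real"
  TermCost :: "'x \<Rightarrow> real"

text \<open>A candidate solution (S, y, u): duration, state trajectory, control trajectory.\<close>
type_synonym ('x, 'u) traj = "real \<times> (real \<Rightarrow> 'x) \<times> (real \<Rightarrow> 'u)"

definition feasible :: "('x::real_normed_vector, 'u) opt_problem \<Rightarrow> ('x, 'u) traj \<Rightarrow> bool" where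
  "feasible P t \<longleftrightarrow> (case t of (S, y, u) \<Rightarrow>
     S \<ge> 0 \<and> y 0 = x_init P \<and> y S \<in> Goal P \<and>
     (\<forall>s\<in>{0..S}. y s \<in> StateSp P \<and> u s \<in> CtrlSp P \<and> y s \<in> Free P \<and>
        u s \<in> Adm P (y s) \<and>
        (y has_vector_derivative Dyn P (y s) (u s)) (at s within {0..S})) \<and>
     (\<lambda>s. IncCost P (y s) (u s)) integrable_on {0..S})"

definition cost :: "('x::real_normed_vector, 'u) opt_problem \<Rightarrow> ('x, 'u) traj \<Rightarrow> real" where
  "cost P t = (case t of (S, y, u) \<Rightarrow>
     integral {0..S} (\<lambda>s. IncCost P (y s) (u s)) + TermCost P (y S))"

definition opt_cost :: "('x::real_normed_vector, 'u) opt_problem \<Rightarrow> real" where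
  "opt_cost P = Inf (cost P ` {t. feasible P t})"

definition sol_bound :: "('x::real_normed_vector, 'u) opt_problem \<Rightarrow> ereal \<Rightarrow> ('x, 'u) traj \<Rightarrow> bool" where
  "sol_bound P cb t \<longleftrightarrow> feasible P t \<and> ereal (cost P t) \<le> cb"

text \<open>A randomized planner is modelled as a deterministic function A of the cost bound
  and of a random seed drawn from the probability space R (fresh seed for every run).\<close>
definition randomized_planner ::
  "('x::real_normed_vector, 'u) opt_problem \<Rightarrow> 'r measure \<Rightarrow> (ereal \<Rightarrow> 'r \<Rightarrow> ('x, 'u) traj) \<Rightarrow> bool" where
  "randomized_planner P R A \<longleftrightarrow> prob_space R \<and>
     (\<lambda>p. cost P (A (fst p) (snd p))) \<in> borel_measurable (borel \<Otimes>\<^sub>M R)"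

definition well_behaved ::
  "('x::real_normed_vector, 'u) opt_problem \<Rightarrow> 'r measure \<Rightarrow> (ereal \<Rightarrow> 'r \<Rightarrow> ('x, 'u) traj) \<Rightarrow> bool" where
  "well_behaved P R A \<longleftrightarrow>
     (\<forall>cb. (\<exists>t. sol_bound P cb t) \<longrightarrow> (\<forall>\<omega>\<in>space R. sol_bound P cb (A cb \<omega>))) \<and>
     (\<exists>w>0. \<forall>c::real. c \<ge> opt_cost P \<longrightarrow>
        (\<integral>\<omega>. cost P (A (ereal c) \<omega>) - opt_cost P \<partial>R) \<le> (1 - w) * (c - opt_cost P))"

primrec ao_run ::
  "('x::real_normed_vector, 'u) opt_problem \<Rightarrow> (ereal \<Rightarrow> 'r \<Rightarrow> ('x, 'u) traj) \<Rightarrow> nat \<Rightarrow> (nat \<Rightarrow> 'r) \<Rightarrow> ('x, 'u) traj" where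
  "ao_run P A 0 \<omega> = A \<infinity> (\<omega> 0)"
| "ao_run P A (Suc i) \<omega> = A (ereal (cost P (ao_run P A i \<omega>))) (\<omega> (Suc i))"

end

theory Submission
  imports Defs
begin

text \<open>Each run started from a cost bound \<open>c \<ge> C*\<close> returns a cost in \<open>[C*, c]\<close> whose expected
  excess over \<open>C*\<close> is at most \<open>q (c - C*)\<close> for a fixed \<open>q < 1\<close>. Conditionally on the seed of the
  first, unbounded run, the excess after \<open>n\<close> further runs therefore has expectation at most
  \<open>q\<^sup>n\<close> times the initial excess, so by Markov's inequality it stays above any \<open>1/k\<close> forever only
  with probability zero. As the costs decrease, they converge to \<open>C*\<close> almost surely, and almost
  sure convergence implies convergence in probability by dominated convergence.\<close>

lemma decseq_tendsto_lower_bound: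
  fixes X :: "nat \<Rightarrow> real"
  assumes "decseq X" and "\<And>n. m \<le> X n" and "\<And>e. 0 < e \<Longrightarrow> \<exists>n. X n < m + e"
  shows "X \<longlonglongrightarrow> m"
proof (rule order_tendstoI)
  fix a assume "a < m"
  then show "\<forall>\<^sub>F n in sequentially. a < X n"
    using assms(2) by (auto intro: always_eventually less_le_trans)
next
  fix b assume "m < b"
  then obtain n0 where "X n0 < b" using assms(3)[of "b - m"] by auto
  then show "\<forall>\<^sub>F n in sequentially. X n < b"
    using \<open>decseq X\<close> unfolding eventually_sequentially decseq_def by (meson le_less_trans)
qed

lemma (in finite_measure) tendsto_in_measure_of_AE_tendsto:
  fixes X :: "nat \<Rightarrow> 'a \<Rightarrow> real"
  assumes [measurable]: "\<And>n. X n \<in> borel_measurable M" "l \<in> borel_measurable M"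
    and conv: "AE x in M. (\<lambda>n. X n x) \<longlonglongrightarrow> l x" and "0 < \<epsilon>"
  shows "(\<lambda>n. measure M {x \<in> space M. \<epsilon> \<le> \<bar>X n x - l x\<bar>}) \<longlonglongrightarrow> 0"
proof -
  define D where "D n = {x \<in> space M. \<epsilon> \<le> \<bar>X n x - l x\<bar>}" for n
  have [measurable]: "D n \<in> sets M" for n unfolding D_def by measurable
  have "(\<lambda>n. \<integral>x. indicat_real (D n) x \<partial>M) \<longlonglongrightarrow> (\<integral>x. 0 \<partial>M)"
  proof (rule integral_dominated_convergence[where w="\<lambda>_. 1"])
    show "AE x in M. (\<lambda>n. indicator (D n) x :: real) \<longlonglongrightarrow> 0"
      using conv
    proof eventually_elim
      case (elim x)
      then have "\<forall>\<^sub>F n in sequentially. dist (X n x) (l x) < \<epsilon>"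
        using \<open>0 < \<epsilon>\<close> by (rule tendstoD)
      then have "\<forall>\<^sub>F n in sequentially. indicator (D n) x = (0::real)"
        by eventually_elim (auto simp: D_def dist_real_def)
      then show ?case by (rule tendsto_eventually)
    qed
  qed auto
  then show ?thesis
    by (simp add: D_def[symmetric])
qed

primrec random_iterate :: "(real \<Rightarrow> 'r \<Rightarrow> real) \<Rightarrow> real \<Rightarrow> nat \<Rightarrow> 'r stream \<Rightarrow> real" where
  "random_iterate f c 0 s = c"
| "random_iterate f c (Suc n) s = f (random_iterate f c n s) (s !! n)"

lemma random_iterate_Suc_Stream:
  "random_iterate f c (Suc n) (x ## s) = random_iterate f (f c x) n s"
  by (induction n) simp_all

locale random_descent = prob_space R for R :: "'r measure" +
  fixes f :: "real \<Rightarrow> 'r \<Rightarrow> real" and m q :: real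
  assumes measurable_step: "(\<lambda>p. f (fst p) (snd p)) \<in> borel_measurable (borel \<Otimes>\<^sub>M R)"
    and step_bounds: "m \<le> c \<Longrightarrow> x \<in> space R \<Longrightarrow> m \<le> f c x \<and> f c x \<le> c"
    and step_contraction: "m \<le> c \<Longrightarrow> (\<integral>\<^sup>+x. ennreal (f c x - m) \<partial>R) \<le> ennreal (q * (c - m))"
    and factor_nonneg: "0 \<le> q" and factor_less_1: "q < 1"
begin

interpretation S: prob_space "stream_space R"
  by (rule prob_space_stream_space)

lemma measurable_step_compose [measurable (raw)]:
  "g \<in> borel_measurable M \<Longrightarrow> h \<in> M \<rightarrow>\<^sub>M R \<Longrightarrow> (\<lambda>x. f (g x) (h x)) \<in> borel_measurable M"
  using measurable_compose[OF measurable_Pair measurable_step] by simp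

lemma measurable_random_iterate [measurable (raw)]:
  "g \<in> borel_measurable M \<Longrightarrow> h \<in> M \<rightarrow>\<^sub>M stream_space R
    \<Longrightarrow> (\<lambda>x. random_iterate f (g x) n (h x)) \<in> borel_measurable M"
  by (induction n) simp_all

lemma random_iterate_bounds:
  assumes "m \<le> c" and "s \<in> streams (space R)"
  shows "m \<le> random_iterate f c n s \<and> random_iterate f c n s \<le> c"
proof (induction n)
  case (Suc n)
  then show ?case
    using step_bounds[of "random_iterate f c n s" "s !! n"] assms(2) by (auto simp: snth_in)
qed (simp add: assms(1))

lemma decseq_random_iterate:
  assumes "m \<le> c" and "s \<in> streams (space R)"
  shows "decseq (\<lambda>n. random_iterate f c n s)"
  using random_iterate_bounds[OF assms] step_bounds assms(2)
  by (intro decseq_SucI) (simp add: snth_in)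

lemma nn_integral_random_iterate:
  assumes "m \<le> c"
  shows "(\<integral>\<^sup>+s. ennreal (random_iterate f c n s - m) \<partial>stream_space R) \<le> ennreal (q ^ n * (c - m))"
  using assms
proof (induction n arbitrary: c)
  case 0
  then show ?case by (simp add: S.emeasure_space_1)
next
  case (Suc n)
  have "(\<integral>\<^sup>+s. ennreal (random_iterate f c (Suc n) s - m) \<partial>stream_space R)
      = (\<integral>\<^sup>+x. (\<integral>\<^sup>+s. ennreal (random_iterate f (f c x) n s - m) \<partial>stream_space R) \<partial>R)"
    by (subst nn_integral_stream_space) (measurable, simp only: random_iterate_Suc_Stream)
  also have "\<dots> \<le> (\<integral>\<^sup>+x. ennreal (q ^ n) * ennreal (f c x - m) \<partial>R)"
  proof (rule nn_integral_mono)
    fix x assume "x \<in> space R"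
    then have "m \<le> f c x" using step_bounds Suc.prems by blast
    then show "(\<integral>\<^sup>+s. ennreal (random_iterate f (f c x) n s - m) \<partial>stream_space R)
        \<le> ennreal (q ^ n) * ennreal (f c x - m)"
      using Suc.IH factor_nonneg by (simp add: ennreal_mult[symmetric])
  qed
  also have "\<dots> = ennreal (q ^ n) * (\<integral>\<^sup>+x. ennreal (f c x - m) \<partial>R)"
    by (rule nn_integral_cmult) measurable
  also have "\<dots> \<le> ennreal (q ^ n) * ennreal (q * (c - m))"
    by (intro mult_left_mono step_contraction Suc.prems) simp
  also have "\<dots> = ennreal (q ^ Suc n * (c - m))"
    using factor_nonneg Suc.prems by (simp add: ennreal_mult[symmetric] mult_ac)
  finally show ?case .
qed

lemma measure_random_iterate_ge:
  assumes "m \<le> c" and "0 < \<epsilon>"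
  shows "measure (stream_space R) {s \<in> space (stream_space R). \<epsilon> \<le> random_iterate f c n s - m}
    \<le> q ^ n * (c - m) / \<epsilon>"
proof -
  have bounds: "s \<in> space (stream_space R) \<Longrightarrow> m \<le> random_iterate f c n s \<and> random_iterate f c n s \<le> c" for s
    using random_iterate_bounds[OF assms(1)] by (simp add: space_stream_space)
  have int: "integrable (stream_space R) (\<lambda>s. random_iterate f c n s - m)"
    by (rule S.integrable_const_bound[where B="c - m"]) (use bounds in auto)
  have "ennreal (\<integral>s. random_iterate f c n s - m \<partial>stream_space R)
      = (\<integral>\<^sup>+s. ennreal (random_iterate f c n s - m) \<partial>stream_space R)"
    by (rule nn_integral_eq_integral[OF int, symmetric]) (use bounds in auto)
  also have "\<dots> \<le> ennreal (q ^ n * (c - m))"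
    by (rule nn_integral_random_iterate[OF assms(1)])
  finally have "(\<integral>s. random_iterate f c n s - m \<partial>stream_space R) \<le> q ^ n * (c - m)"
    using assms(1) factor_nonneg by simp
  then have "(\<integral>s. random_iterate f c n s - m \<partial>stream_space R) / \<epsilon> \<le> q ^ n * (c - m) / \<epsilon>"
    using assms(2) by (rule divide_right_mono[OF _ less_imp_le])
  with integral_Markov_inequality_measure[OF int sets.top _ assms(2)] show ?thesis
    using bounds by (auto intro: AE_I2)
qed

lemma AE_ex_random_iterate_less:
  assumes "m \<le> c" and "0 < e"
  shows "AE s in stream_space R. \<exists>n. random_iterate f c n s < m + e"
proof (rule AE_I')
  define N where "N = {s \<in> space (stream_space R). \<forall>n. m + e \<le> random_iterate f c n s}"
  have bound: "measure (stream_space R) N \<le> q ^ n * (c - m) / e" for n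
  proof (rule order_trans[OF _ measure_random_iterate_ge[OF assms]])
    show "measure (stream_space R) N
        \<le> measure (stream_space R) {s \<in> space (stream_space R). e \<le> random_iterate f c n s - m}"
      by (rule S.finite_measure_mono) (auto simp: N_def le_diff_eq add.commute)
  qed
  have "(\<lambda>n. q ^ n * (c - m) / e) \<longlonglongrightarrow> 0 * (c - m) / e"
    using factor_nonneg factor_less_1 assms(2) by (intro tendsto_intros LIMSEQ_power_zero) auto
  then have "measure (stream_space R) N \<le> 0 * (c - m) / e"
    by (rule LIMSEQ_le_const) (use bound in auto)
  moreover have "N \<in> sets (stream_space R)"
    unfolding N_def by measurable
  ultimately show "N \<in> null_sets (stream_space R)"
    by (simp add: S.emeasure_eq_measure null_sets_def antisym)
qed (auto simp: not_less)

lemma AE_random_iterate_tendsto: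
  assumes "m \<le> c"
  shows "AE s in stream_space R. (\<lambda>n. random_iterate f c n s) \<longlonglongrightarrow> m"
proof -
  have "AE s in stream_space R. \<forall>k. \<exists>n. random_iterate f c n s < m + 1 / Suc k"
    using AE_ex_random_iterate_less[OF assms] by (simp add: AE_all_countable)
  then show ?thesis
  proof (rule AE_mp[OF _ AE_I2[OF impI]])
    fix s assume s: "s \<in> space (stream_space R)"
      and approx: "\<forall>k. \<exists>n. random_iterate f c n s < m + 1 / Suc k"
    show "(\<lambda>n. random_iterate f c n s) \<longlonglongrightarrow> m"
    proof (rule decseq_tendsto_lower_bound)
      show "decseq (\<lambda>n. random_iterate f c n s)" "m \<le> random_iterate f c n s" for n
        using s decseq_random_iterate random_iterate_bounds assms by (auto simp: space_stream_space)
      fix e :: real assume "0 < e"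
      then obtain k where "1 / Suc k < e"
        using reals_Archimedean by (auto simp: inverse_eq_divide)
      with approx show "\<exists>n. random_iterate f c n s < m + e"
        by (meson add_strict_left_mono less_trans)
    qed
  qed
qed

end



locale cost_attained =
  fixes P :: "('x::real_normed_vector, 'u) opt_problem"
  assumes attained: "\<exists>t. feasible P t \<and> (\<forall>t'. feasible P t' \<longrightarrow> cost P t \<le> cost P t')"
begin

lemma opt_cost_le_cost:
  assumes "feasible P t"
  shows "opt_cost P \<le> cost P t"
proof -
  obtain t0 where "\<And>t'. feasible P t' \<Longrightarrow> cost P t0 \<le> cost P t'"
    using attained by blast
  then have "bdd_below (cost P ` {t. feasible P t})"
    by (intro bdd_belowI2) blast
  then show ?thesis
    unfolding opt_cost_def using assms by (auto intro: cInf_lower)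
qed

lemma exists_sol_bound:
  assumes "ereal (opt_cost P) \<le> cb"
  shows "\<exists>t. sol_bound P cb t"
proof -
  obtain t where t: "feasible P t" "\<And>t'. feasible P t' \<Longrightarrow> cost P t \<le> cost P t'"
    using attained by blast
  have "opt_cost P = cost P t"
    unfolding opt_cost_def by (rule cInf_eq_minimum) (use t in auto)
  then show ?thesis
    using t(1) assms unfolding sol_bound_def by metis
qed

end

lemma cost_ao_run_snth:
  "cost P (ao_run P A n (\<lambda>i. s !! i))
    = random_iterate (\<lambda>c x. cost P (A (ereal c) x)) (cost P (A \<infinity> (shd s))) n (stl s)"
  by (induction n) simp_all

locale well_behaved_planning = cost_attained P
  for P :: "('x::real_normed_vector, 'u) opt_problem" +
  fixes R :: "'r measure" and A :: "ereal \<Rightarrow> 'r \<Rightarrow> ('x, 'u) traj"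
  assumes planner: "randomized_planner P R A" and wb: "well_behaved P R A"
begin

sublocale prob_space R
  using planner unfolding randomized_planner_def by blast

lemma measurable_cost_planner [measurable (raw)]:
  assumes "g \<in> M \<rightarrow>\<^sub>M borel" and "h \<in> M \<rightarrow>\<^sub>M R"
  shows "(\<lambda>x. cost P (A (g x) (h x))) \<in> borel_measurable M"
proof -
  have "(\<lambda>p. cost P (A (fst p) (snd p))) \<in> borel_measurable (borel \<Otimes>\<^sub>M R)"
    using planner unfolding randomized_planner_def by blast
  from measurable_compose[OF measurable_Pair[OF assms] this] show ?thesis
    by simp
qed

lemma measurable_cost_ao_run [measurable]:
  "(\<lambda>\<omega>. cost P (ao_run P A n \<omega>)) \<in> borel_measurable (PiM UNIV (\<lambda>_::nat. R))"
proof (induction n)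
  case (Suc n)
  then have "(\<lambda>\<omega>. ereal (cost P (ao_run P A n \<omega>))) \<in> borel_measurable (PiM UNIV (\<lambda>_::nat. R))"
    by measurable
  then show ?case
    by simp measurable
qed simp

lemma cost_planner_bounds:
  assumes "ereal (opt_cost P) \<le> cb" and "x \<in> space R"
  shows "opt_cost P \<le> cost P (A cb x) \<and> ereal (cost P (A cb x)) \<le> cb"
proof -
  have "sol_bound P cb (A cb x)"
    using assms wb exists_sol_bound unfolding well_behaved_def by blast
  then show ?thesis
    using opt_cost_le_cost unfolding sol_bound_def by auto
qed

lemma random_descent_cost_planner:
  obtains q where "random_descent R (\<lambda>c x. cost P (A (ereal c) x)) (opt_cost P) q"
proof -
  let ?C = "opt_cost P"
  obtain w where "0 < w"
    and w: "\<And>c. ?C \<le> c \<Longrightarrow> (\<integral>x. cost P (A (ereal c) x) - ?C \<partial>R) \<le> (1 - w) * (c - ?C)"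
    using wb unfolding well_behaved_def by blast
  have bounds: "?C \<le> c \<Longrightarrow> x \<in> space R \<Longrightarrow> ?C \<le> cost P (A (ereal c) x) \<and> cost P (A (ereal c) x) \<le> c"
    for c x
    using cost_planner_bounds[of "ereal c" x] by simp
  \<comment> \<open>\<open>w\<close> may exceed 1\<close>
  have "random_descent R (\<lambda>c x. cost P (A (ereal c) x)) ?C (max 0 (1 - w))"
  proof
    show "(\<lambda>p. cost P (A (ereal (fst p)) (snd p))) \<in> borel_measurable (borel \<Otimes>\<^sub>M R)"
      by measurable
    show "(\<integral>\<^sup>+x. ennreal (cost P (A (ereal c) x) - ?C) \<partial>R) \<le> ennreal (max 0 (1 - w) * (c - ?C))"
      if c: "?C \<le> c" for c
    proof -
      have int: "integrable R (\<lambda>x. cost P (A (ereal c) x) - ?C)"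
        by (rule integrable_const_bound[where B="c - ?C"]) (use bounds c in auto)
      have "(1 - w) * (c - ?C) \<le> max 0 (1 - w) * (c - ?C)"
        using c by (intro mult_right_mono) auto
      then show ?thesis
        using w[OF c] by (subst nn_integral_eq_integral[OF int]) (use bounds[OF c] in \<open>auto intro!: ennreal_leI\<close>)
    qed
  qed (use bounds \<open>0 < w\<close> in auto)
  then show ?thesis using that by blast
qed

lemma AE_cost_ao_run_tendsto:
  "AE \<omega> in PiM UNIV (\<lambda>_::nat. R). (\<lambda>n. cost P (ao_run P A n \<omega>)) \<longlonglongrightarrow> opt_cost P"
proof -
  obtain q where "random_descent R (\<lambda>c x. cost P (A (ereal c) x)) (opt_cost P) q"
    using random_descent_cost_planner .
  then interpret random_descent R "\<lambda>c x. cost P (A (ereal c) x)" "opt_cost P" q .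
  \<comment> \<open>the cost of the first, unbounded run need not be integrable, so we condition on its seed\<close>
  have "AE s in stream_space R. (\<lambda>n. cost P (ao_run P A n (\<lambda>i. s !! i))) \<longlonglongrightarrow> opt_cost P"
    unfolding cost_ao_run_snth
  proof (subst AE_stream_space)
    show "Measurable.pred (stream_space R) (\<lambda>s. (\<lambda>n. random_iterate (\<lambda>c x. cost P (A (ereal c) x))
        (cost P (A \<infinity> (shd s))) n (stl s)) \<longlonglongrightarrow> opt_cost P)"
      by measurable
    show "AE x in R. AE s in stream_space R. (\<lambda>n. random_iterate (\<lambda>c x. cost P (A (ereal c) x))
        (cost P (A \<infinity> (shd (x ## s)))) n (stl (x ## s))) \<longlonglongrightarrow> opt_cost P"
      using cost_planner_bounds[of \<infinity>] by (auto intro!: AE_I2 AE_random_iterate_tendsto)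
  qed
  then have "AE \<omega> in PiM UNIV (\<lambda>_. R). (\<lambda>n. cost P (ao_run P A n (\<lambda>i. to_stream \<omega> !! i))) \<longlonglongrightarrow> opt_cost P"
    by (subst (asm) stream_space_eq_distr) (rule AE_distrD[OF measurable_to_stream])
  then show ?thesis
    by (simp add: to_stream_def)
qed

lemma tendsto_measure_cost_ao_run_ge:
  assumes "0 < \<epsilon>"
  shows "(\<lambda>n. measure (PiM UNIV (\<lambda>_::nat. R))
    {\<omega> \<in> space (PiM UNIV (\<lambda>_::nat. R)). cost P (ao_run P A n \<omega>) - opt_cost P \<ge> \<epsilon>}) \<longlonglongrightarrow> 0"
proof -
  let ?\<Omega> = "PiM UNIV (\<lambda>_::nat. R)"
  interpret \<Omega>: prob_space ?\<Omega>
    by (auto intro: prob_space_PiM prob_space_axioms)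
  show ?thesis
  proof (rule tendsto_sandwich[OF _ _ tendsto_const])
    show "(\<lambda>n. measure ?\<Omega> {\<omega> \<in> space ?\<Omega>. \<epsilon> \<le> \<bar>cost P (ao_run P A n \<omega>) - opt_cost P\<bar>}) \<longlonglongrightarrow> 0"
      by (intro \<Omega>.tendsto_in_measure_of_AE_tendsto AE_cost_ao_run_tendsto assms) auto
    show "\<forall>\<^sub>F n in sequentially. measure ?\<Omega> {\<omega> \<in> space ?\<Omega>. cost P (ao_run P A n \<omega>) - opt_cost P \<ge> \<epsilon>}
        \<le> measure ?\<Omega> {\<omega> \<in> space ?\<Omega>. \<epsilon> \<le> \<bar>cost P (ao_run P A n \<omega>) - opt_cost P\<bar>}"
      by (intro always_eventually allI \<Omega>.finite_measure_mono) auto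
  qed simp
qed

end

theorem theorem3:
  fixes P :: "('x::real_normed_vector, 'u) opt_problem"
    and R :: "'r measure"
    and A :: "ereal \<Rightarrow> 'r \<Rightarrow> ('x, 'u) traj"
  assumes attained: "\<exists>t. feasible P t \<and> (\<forall>t'. feasible P t' \<longrightarrow> cost P t \<le> cost P t')"
    and planner: "randomized_planner P R A"
    and wb: "well_behaved P R A"
  shows "(\<forall>\<epsilon>>0. (\<lambda>n. measure (PiM UNIV (\<lambda>_::nat. R))
              {\<omega> \<in> space (PiM UNIV (\<lambda>_::nat. R)). cost P (ao_run P A n \<omega>) - opt_cost P \<ge> \<epsilon>})
            \<longlonglongrightarrow> 0)
       \<and> (AE \<omega> in PiM UNIV (\<lambda>_::nat. R). (\<lambda>n. cost P (ao_run P A n \<omega>)) \<longlonglongrightarrow> opt_cost P)"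
proof -
  interpret well_behaved_planning P R A
    using assms by unfold_locales
  show ?thesis
    using tendsto_measure_cost_ao_run_ge AE_cost_ao_run_tendsto by blast
qed

end
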